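(* Let $\mathbb{C}$ be a local category. Define a relation on objects by $A\le B$ if and only if $\mathsf{L}A=\mathsf{L}B$ and there exists a morphism $m:A\to B$ with $m\eta_B=\eta_A$. Then: $A\le A$ for every object $A$; $A\le B$ and $B\le C$ imply $A\le C$; and $A\le B$ and $B\le A$ imply $A\cong B$.
   Context: Composition is diagrammatic. A local category is a category $\mathbb{C}$ with, for each object $M$, an object $\mathsf{L}M$ and a morphism $\eta_M:M\to\mathsf{L}M$ such that (L.1) $\mathsf{L}\mathsf{L}M=\mathsf{L}M$ and $\eta_{\mathsf{L}M}=\mathrm{id}_{\mathsf{L}M}$; (L.2) each $\eta_M$ is monic; (L.3) for every $M$ and every $f:N\to\mathsf{L}M$ a pullback of $\eta_M$ along $f$ exists, with leg $m:P\to N$, such that $\mathsf{L}P=\mathsf{L}N$ and $m\eta_N=\eta_P$. *)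

theory Defs
  imports Main
begin

text \<open>A (possibly large) category presented by objects, arrows, domain, codomain,
  identities and diagrammatic composition: comp f g means "first f, then g".\<close>

record ('o, 'm) category_data =
  Ob   :: "'o set"
  Ar   :: "'m set"
  dom  :: "'m \<Rightarrow> 'o"
  cod  :: "'m \<Rightarrow> 'o"
  comp :: "'m \<Rightarrow> 'm \<Rightarrow> 'm"
  idt  :: "'o \<Rightarrow> 'm"

definition hom :: "('o, 'm) category_data \<Rightarrow> 'o \<Rightarrow> 'o \<Rightarrow> 'm set" where
  "hom X A B = {f \<in> Ar X. dom X f = A \<and> cod X f = B}"

definition category :: "('o, 'm) category_data \<Rightarrow> bool" where
  "category X \<longleftrightarrow>
     (\<forall>f \<in> Ar X. dom X f \<in> Ob X \<and> cod X f \<in> Ob X) \<and>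
     (\<forall>A \<in> Ob X. idt X A \<in> hom X A A) \<and>
     (\<forall>f \<in> Ar X. \<forall>g \<in> Ar X. cod X f = dom X g \<longrightarrow>
        comp X f g \<in> hom X (dom X f) (cod X g)) \<and>
     (\<forall>f \<in> Ar X. comp X (idt X (dom X f)) f = f \<and> comp X f (idt X (cod X f)) = f) \<and>
     (\<forall>f \<in> Ar X. \<forall>g \<in> Ar X. \<forall>h \<in> Ar X. cod X f = dom X g \<longrightarrow> cod X g = dom X h \<longrightarrow>
        comp X (comp X f g) h = comp X f (comp X g h))"

definition monic :: "('o, 'm) category_data \<Rightarrow> 'm \<Rightarrow> bool" where
  "monic X f \<longleftrightarrow> f \<in> Ar X \<and>
     (\<forall>g \<in> Ar X. \<forall>h \<in> Ar X. cod X g = dom X f \<longrightarrow> cod X h = dom X f \<longrightarrow>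
        dom X g = dom X h \<longrightarrow> comp X g f = comp X h f \<longrightarrow> g = h)"

definition is_pullback ::
  "('o, 'm) category_data \<Rightarrow> 'm \<Rightarrow> 'm \<Rightarrow> 'o \<Rightarrow> 'm \<Rightarrow> 'm \<Rightarrow> bool" where
  "is_pullback X f g P m n \<longleftrightarrow>
     P \<in> Ob X \<and> m \<in> hom X P (dom X f) \<and> n \<in> hom X P (dom X g) \<and>
     comp X m f = comp X n g \<and>
     (\<forall>Q \<in> Ob X. \<forall>a \<in> hom X Q (dom X f). \<forall>b \<in> hom X Q (dom X g).
        comp X a f = comp X b g \<longrightarrow>
        (\<exists>!u. u \<in> hom X Q P \<and> comp X u m = a \<and> comp X u n = b))"

definition local_category ::
  "('o, 'm) category_data \<Rightarrow> ('o \<Rightarrow> 'o) \<Rightarrow> ('o \<Rightarrow> 'm) \<Rightarrow> bool" where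
  "local_category X L \<eta> \<longleftrightarrow>
     category X \<and>
     (\<forall>M \<in> Ob X. L M \<in> Ob X \<and> \<eta> M \<in> hom X M (L M)) \<and>
     (\<forall>M \<in> Ob X. L (L M) = L M \<and> \<eta> (L M) = idt X (L M)) \<and>
     (\<forall>M \<in> Ob X. monic X (\<eta> M)) \<and>
     (\<forall>M \<in> Ob X. \<forall>N \<in> Ob X. \<forall>f \<in> hom X N (L M).
        \<exists>P m n. is_pullback X f (\<eta> M) P m n \<and> L P = L N \<and> comp X m (\<eta> N) = \<eta> P)"

definition iso_objs :: "('o, 'm) category_data \<Rightarrow> 'o \<Rightarrow> 'o \<Rightarrow> bool" where
  "iso_objs X A B \<longleftrightarrow> (\<exists>f \<in> hom X A B. \<exists>g \<in> hom X B A.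
     comp X f g = idt X A \<and> comp X g f = idt X B)"

definition loc_le ::
  "('o, 'm) category_data \<Rightarrow> ('o \<Rightarrow> 'o) \<Rightarrow> ('o \<Rightarrow> 'm) \<Rightarrow> 'o \<Rightarrow> 'o \<Rightarrow> bool" where
  "loc_le X L \<eta> A B \<longleftrightarrow> L A = L B \<and> (\<exists>m \<in> hom X A B. comp X m (\<eta> B) = \<eta> A)"

end

theory Submission
  imports Defs
begin

(* Call m : A \<rightarrow> B an arrow over \<eta> if m \<eta>_B = \<eta>_A. Identities are over \<eta> and composites
   of arrows over \<eta> are over \<eta>. If m : A \<rightarrow> B and n : B \<rightarrow> A are both over \<eta>, then
   m n \<eta>_A = \<eta>_A = id \<eta>_A, so m n = id since \<eta>_A is monic; symmetrically n m = id.
   Neither the idempotence of L nor the pullback axiom (L.3) is needed. *)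

lemma category_comp_in_hom:
  assumes "category X" "f \<in> hom X A B" "g \<in> hom X B C"
  shows "comp X f g \<in> hom X A C"
  using assms unfolding category_def hom_def by auto

lemma category_idt_in_hom:
  assumes "category X" "A \<in> Ob X"
  shows "idt X A \<in> hom X A A"
  using assms unfolding category_def by blast

lemma category_comp_idt_left:
  assumes "category X" "f \<in> hom X A B"
  shows "comp X (idt X A) f = f"
  using assms unfolding category_def hom_def by auto

lemma category_comp_assoc:
  assumes "category X" "f \<in> hom X A B" "g \<in> hom X B C" "h \<in> hom X C D"
  shows "comp X (comp X f g) h = comp X f (comp X g h)"
  using assms unfolding category_def hom_def by auto

lemma monic_comp_eq_self_imp_idt:
  assumes "category X" "monic X e" "e \<in> hom X A Z" "u \<in> hom X A A"
    and "comp X u e = e"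
  shows "u = idt X A"
proof -
  have "A \<in> Ob X"
    using assms(1,3) unfolding category_def hom_def by blast
  then have "idt X A \<in> hom X A A"
    by (rule category_idt_in_hom[OF assms(1)])
  moreover have "comp X u e = comp X (idt X A) e"
    using assms(5) category_comp_idt_left[OF assms(1,3)] by simp
  ultimately show ?thesis
    using assms(2-4) unfolding monic_def hom_def by auto
qed

lemma local_category_category: "local_category X L \<eta> \<Longrightarrow> category X"
  unfolding local_category_def by blast

lemma local_category_eta_in_hom:
  "local_category X L \<eta> \<Longrightarrow> M \<in> Ob X \<Longrightarrow> \<eta> M \<in> hom X M (L M)"
  unfolding local_category_def by blast

lemma local_category_eta_monic:
  "local_category X L \<eta> \<Longrightarrow> M \<in> Ob X \<Longrightarrow> monic X (\<eta> M)"
  unfolding local_category_def by blast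

lemma loc_le_refl:
  assumes "category X" "A \<in> Ob X" "\<eta> A \<in> hom X A (L A)"
  shows "loc_le X L \<eta> A A"
  unfolding loc_le_def
  using category_idt_in_hom[OF assms(1,2)] category_comp_idt_left[OF assms(1,3)] by blast

lemma loc_le_trans:
  assumes "category X" "\<eta> C \<in> hom X C (L C)"
    and "loc_le X L \<eta> A B" "loc_le X L \<eta> B C"
  shows "loc_le X L \<eta> A C"
proof -
  obtain m n where m: "m \<in> hom X A B" "comp X m (\<eta> B) = \<eta> A"
    and n: "n \<in> hom X B C" "comp X n (\<eta> C) = \<eta> B"
    and "L A = L C"
    using assms(3,4) unfolding loc_le_def by auto
  moreover have "comp X (comp X m n) (\<eta> C) = \<eta> A"
    using category_comp_assoc[OF assms(1) m(1) n(1) assms(2)] m(2) n(2) by simp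
  ultimately show ?thesis
    unfolding loc_le_def using category_comp_in_hom[OF assms(1) m(1) n(1)] by blast
qed

lemma loc_le_antisym_iso:
  assumes "category X"
    and "\<eta> A \<in> hom X A (L A)" "monic X (\<eta> A)"
    and "\<eta> B \<in> hom X B (L B)" "monic X (\<eta> B)"
    and "loc_le X L \<eta> A B" "loc_le X L \<eta> B A"
  shows "iso_objs X A B"
proof -
  obtain m n where m: "m \<in> hom X A B" "comp X m (\<eta> B) = \<eta> A"
    and n: "n \<in> hom X B A" "comp X n (\<eta> A) = \<eta> B"
    using assms(6,7) unfolding loc_le_def by auto
  have "comp X (comp X m n) (\<eta> A) = \<eta> A"
    using category_comp_assoc[OF assms(1) m(1) n(1) assms(2)] m(2) n(2) by simp
  then have mn: "comp X m n = idt X A"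
    using monic_comp_eq_self_imp_idt[OF assms(1,3,2)]
      category_comp_in_hom[OF assms(1) m(1) n(1)] by blast
  have "comp X (comp X n m) (\<eta> B) = \<eta> B"
    using category_comp_assoc[OF assms(1) n(1) m(1) assms(4)] m(2) n(2) by simp
  then have nm: "comp X n m = idt X B"
    using monic_comp_eq_self_imp_idt[OF assms(1,5,4)]
      category_comp_in_hom[OF assms(1) n(1) m(1)] by blast
  show ?thesis
    unfolding iso_objs_def using m(1) n(1) mn nm by blast
qed

theorem proposition5p6:
  fixes X :: "('o, 'm) category_data" and L :: "'o \<Rightarrow> 'o" and \<eta> :: "'o \<Rightarrow> 'm"
  assumes "local_category X L \<eta>"
  shows "(\<forall>A \<in> Ob X. loc_le X L \<eta> A A) \<and>
         (\<forall>A \<in> Ob X. \<forall>B \<in> Ob X. \<forall>C \<in> Ob X.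
            loc_le X L \<eta> A B \<and> loc_le X L \<eta> B C \<longrightarrow> loc_le X L \<eta> A C) \<and>
         (\<forall>A \<in> Ob X. \<forall>B \<in> Ob X.
            loc_le X L \<eta> A B \<and> loc_le X L \<eta> B A \<longrightarrow> iso_objs X A B)"
proof -
  note cat = local_category_category[OF assms]
  note eta = local_category_eta_in_hom[OF assms]
  note mono = local_category_eta_monic[OF assms]
  show ?thesis
  proof (intro conjI ballI impI)
    show "loc_le X L \<eta> A A" if "A \<in> Ob X" for A
      using cat that eta[OF that] by (rule loc_le_refl)
    show "loc_le X L \<eta> A C" if "C \<in> Ob X" "loc_le X L \<eta> A B \<and> loc_le X L \<eta> B C"
      for A B C
      using cat eta[OF that(1)] that(2) by (blast intro: loc_le_trans)
    show "iso_objs X A B"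
      if "A \<in> Ob X" "B \<in> Ob X" "loc_le X L \<eta> A B \<and> loc_le X L \<eta> B A" for A B
      using cat eta[OF that(1)] mono[OF that(1)] eta[OF that(2)] mono[OF that(2)] that(3)
      by (blast intro: loc_le_antisym_iso)
  qed
qed

end
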